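(* Let $n\ge1$, $\alpha>0$, and let $\ell(z,w)=e^{\alpha\langle z,w\rangle}$ for $z,w\in\mathbb{C}^n$ be the reproducing kernel of the Bargmann–Fock space $F^2_\alpha=\{f \text{ entire on } \mathbb{C}^n: \int_{\mathbb{C}^n}|f(z)|^2e^{-\alpha|z|^2}\,dm(z)<\infty\}$ ($dm$ Lebesgue measure). Then $\ell$ has the automatic separation property.
   Context: For a kernel $\ell$ with reproducing kernel Hilbert space $\mathcal{H}_\ell$, $\ell_w=\ell(\cdot,w)$, $\hat\ell_w=\ell_w/\|\ell_w\|$ and $d_\ell(z,w)=\sqrt{1-|\langle\hat\ell_z,\hat\ell_w\rangle|^2}$. A sequence is weakly separated by $\ell$ if $d_\ell(\lambda_i,\lambda_j)\ge\epsilon>0$ for all $i\ne j$; for $m\ge2$ it is $m$-weakly separated by $\ell$ if there is $\epsilon>0$ such that for every $m$-point subset $\{\mu_1,\dots,\mu_m\}$ of it, $\mathrm{dist}(\hat\ell_{\mu_1},\mathrm{span}\{\hat\ell_{\mu_2},\dots,\hat\ell_{\mu_m}\})\ge\epsilon$. $\ell$ has the automatic separation property if every sequence weakly separated by $\ell$ is $m$-weakly separated by $\ell$ for every $m\ge3$. *)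

theory Defs
  imports "HOL-Analysis.Analysis"
begin

definition cinner :: "complex ^ 'n \<Rightarrow> complex ^ 'n \<Rightarrow> complex" where
  "cinner z w = (\<Sum>i\<in>UNIV. z $ i * cnj (w $ i))"

definition fock_kernel :: "real \<Rightarrow> complex ^ 'n \<Rightarrow> complex ^ 'n \<Rightarrow> complex" where
  "fock_kernel \<alpha> z w = exp (complex_of_real \<alpha> * cinner z w)"

text \<open>For a (positive definite) kernel K with l_w = K(.,w), the reproducing property gives
  <l_z, l_w> = K w z and ||l_w||^2 = K w w.  Hence the inner product of the normalized
  kernel functions is <hat l_z, hat l_w> = K w z / (||l_z|| ||l_w||).\<close>
definition nk_inner :: "('a \<Rightarrow> 'a \<Rightarrow> complex) \<Rightarrow> 'a \<Rightarrow> 'a \<Rightarrow> complex" where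
  "nk_inner K z w = K w z / complex_of_real (sqrt (Re (K z z)) * sqrt (Re (K w w)))"

definition kdist :: "('a \<Rightarrow> 'a \<Rightarrow> complex) \<Rightarrow> 'a \<Rightarrow> 'a \<Rightarrow> real" where
  "kdist K z w = sqrt (1 - (cmod (nk_inner K z w))\<^sup>2)"

text \<open>Norm in H_K of the finite combination sum_{s in A} a s * hat l_s, computed from
  the reproducing property (sesquilinearity of the inner product).\<close>
definition nk_comb_norm :: "('a \<Rightarrow> 'a \<Rightarrow> complex) \<Rightarrow> 'a set \<Rightarrow> ('a \<Rightarrow> complex) \<Rightarrow> real" where
  "nk_comb_norm K A a =
     sqrt (Re (\<Sum>s\<in>A. \<Sum>t\<in>A. a s * cnj (a t) * nk_inner K s t))"

text \<open>dist(hat l_x, span{hat l_t : t in T}) for finite T with x not in T: the infimum of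
  ||hat l_x - sum_{t in T} c t * hat l_t|| over all coefficient vectors c.\<close>
definition nk_dist_span :: "('a \<Rightarrow> 'a \<Rightarrow> complex) \<Rightarrow> 'a \<Rightarrow> 'a set \<Rightarrow> real" where
  "nk_dist_span K x T =
     (INF c\<in>(UNIV :: ('a \<Rightarrow> complex) set).
        nk_comb_norm K (insert x T) (\<lambda>s. if s = x then 1 else - c s))"

definition weakly_separated :: "('a \<Rightarrow> 'a \<Rightarrow> complex) \<Rightarrow> (nat \<Rightarrow> 'a) \<Rightarrow> bool" where
  "weakly_separated K lam \<longleftrightarrow>
     (\<exists>\<epsilon>>0. \<forall>i j. i \<noteq> j \<longrightarrow> kdist K (lam i) (lam j) \<ge> \<epsilon>)"

definition m_weakly_separated :: "('a \<Rightarrow> 'a \<Rightarrow> complex) \<Rightarrow> nat \<Rightarrow> (nat \<Rightarrow> 'a) \<Rightarrow> bool" where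
  "m_weakly_separated K m lam \<longleftrightarrow>
     (\<exists>\<epsilon>>0. \<forall>S. S \<subseteq> range lam \<and> finite S \<and> card S = m \<longrightarrow>
        (\<forall>\<mu>\<in>S. nk_dist_span K \<mu> (S - {\<mu>}) \<ge> \<epsilon>))"

definition automatic_separation :: "('a \<Rightarrow> 'a \<Rightarrow> complex) \<Rightarrow> bool" where
  "automatic_separation K \<longleftrightarrow>
     (\<forall>lam. weakly_separated K lam \<longrightarrow> (\<forall>m\<ge>3. m_weakly_separated K m lam))"

end

theory Submission
  imports Defs
begin

(* For the Fock kernel, |<hat l_s, hat l_t>|^2 = exp (-alpha |s - t|^2), so weak separation says
   that the points are uniformly discrete. Translating the distinguished point mu to the origin
   (a unimodular change of the coefficients), the squared distance from hat l_mu to the span of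
   the other normalized kernels becomes the Gram form sum c_s conj(c_t) exp (alpha <x_t, x_s>)
   with x_mu = 0 and c_mu = 1. Its Taylor terms alpha^k/k! sum c_s conj(c_t) <x_t, x_s>^k are
   squared norms of tensor powers, so the Gram form dominates each of them. The polynomial
   p(y) = prod_{t <> mu} (1 - <x_t, y>/|x_t|^2) equals 1 at 0 and vanishes at every other x_t,
   hence 1 = sum_s c_s p(x_s); bounding each homogeneous part of this sum by Cauchy-Schwarz
   against the k-th Taylor term gives a lower bound depending only on m, alpha and the
   separation constant. *)

lemma power2_norm_vec_complex: "(norm z)\<^sup>2 = (\<Sum>i\<in>UNIV. (cmod (z $ i))\<^sup>2)"
  unfolding norm_vec_def L2_set_def by (simp add: sum_nonneg)

lemma cinner_self: "cinner z z = complex_of_real ((norm z)\<^sup>2)"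
  unfolding cinner_def power2_norm_vec_complex by (simp add: complex_mult_cnj cmod_power2)

lemma cnj_cinner: "cnj (cinner z w) = cinner w z"
  unfolding cinner_def by (simp add: mult.commute)

lemma Re_cinner: "Re (cinner z w) = inner z w"
  unfolding cinner_def inner_vec_def inner_complex_def by (simp add: Re_sum)

lemma cinner_scaleR_left: "cinner (r *\<^sub>R z) w = complex_of_real r * cinner z w"
proof -
  have "(r *\<^sub>R z) $ i = complex_of_real r * z $ i" for i
    by (simp add: scaleR_conv_of_real[where 'a=complex])
  then show ?thesis
    unfolding cinner_def by (simp add: sum_distrib_left mult.assoc)
qed

lemma cinner_translate:
  "cinner t s = cinner (t - m) (s - m) + cinner t m + cinner m s - cinner m m"
  unfolding cinner_def by (simp add: sum.distrib[symmetric] sum_subtractf[symmetric] algebra_simps)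

lemma prod_cinner_eq_sum_PiE:
  assumes "finite A"
  shows "(\<Prod>r\<in>A. cinner (w r) y) =
    (\<Sum>f\<in>PiE A (\<lambda>_. UNIV). \<Prod>r\<in>A. w r $ f r * cnj (y $ f r))"
  unfolding cinner_def using assms by (simp add: prod_sum_PiE)

(* With G s t the inner product of e_s and e_t, this is the squared norm of sum c_s e_s. *)
definition gram_form :: "('s \<Rightarrow> 's \<Rightarrow> complex) \<Rightarrow> 's set \<Rightarrow> ('s \<Rightarrow> complex) \<Rightarrow> complex" where
  "gram_form G S c = (\<Sum>s\<in>S. \<Sum>t\<in>S. c s * cnj (c t) * G s t)"

lemma gram_form_cinner_power_eq_sum_squares:
  fixes x :: "'s \<Rightarrow> complex ^ 'n"
  assumes "finite A"
  shows "gram_form (\<lambda>s t. cinner (x t) (x s) ^ card A) S c =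
    complex_of_real (\<Sum>f\<in>PiE A (\<lambda>_. UNIV).
       (cmod (\<Sum>s\<in>S. c s * (\<Prod>r\<in>A. cnj (x s $ f r))))\<^sup>2)"
proof -
  let ?F = "PiE A (\<lambda>_. UNIV :: 'n set)"
  let ?V = "\<lambda>f. \<Sum>s\<in>S. c s * (\<Prod>r\<in>A. cnj (x s $ f r))"
  have cnj_V: "cnj (?V f) = (\<Sum>t\<in>S. cnj (c t) * (\<Prod>r\<in>A. x t $ f r))" for f
    by (simp add: cnj_sum cnj_prod)
  have "complex_of_real (\<Sum>f\<in>?F. (cmod (?V f))\<^sup>2) = (\<Sum>f\<in>?F. ?V f * cnj (?V f))"
    by (simp only: of_real_sum complex_norm_square)
  also have "\<dots> = (\<Sum>s\<in>S. \<Sum>t\<in>S. \<Sum>f\<in>?F.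
      c s * cnj (c t) * ((\<Prod>r\<in>A. x t $ f r) * (\<Prod>r\<in>A. cnj (x s $ f r))))"
    unfolding cnj_V by (simp add: sum_product algebra_simps sum.swap[of _ ?F] sum.swap[of _ ?F S])
  also have "\<dots> = gram_form (\<lambda>s t. cinner (x t) (x s) ^ card A) S c"
    using prod_cinner_eq_sum_PiE[OF assms, of "\<lambda>_. x _"]
    unfolding gram_form_def by (simp add: sum_distrib_left prod.distrib)
  finally show ?thesis by simp
qed

lemma gram_form_cinner_power_nonneg:
  fixes x :: "'s \<Rightarrow> complex ^ 'n"
  shows "Re (gram_form (\<lambda>s t. cinner (x t) (x s) ^ k) S c) \<ge> 0"
  using gram_form_cinner_power_eq_sum_squares[of "{..<k}" x S c] by (simp add: sum_nonneg)

lemma gram_form_fock_sums: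
  fixes x :: "'s \<Rightarrow> complex ^ 'n"
  shows "(\<lambda>k. complex_of_real (\<alpha>^k / fact k) * gram_form (\<lambda>s t. cinner (x t) (x s) ^ k) S c)
    sums gram_form (\<lambda>s t. fock_kernel \<alpha> (x t) (x s)) S c"
proof -
  have "(\<lambda>k. complex_of_real (\<alpha>^k / fact k) * z ^ k) sums fock_exp" if "fock_exp = exp (complex_of_real \<alpha> * z)" for z fock_exp
    using exp_converges[of "complex_of_real \<alpha> * z"] that
    by (simp add: scaleR_conv_of_real power_mult_distrib field_simps)
  then have "(\<lambda>k. c s * cnj (c t) * (complex_of_real (\<alpha>^k / fact k) * cinner (x t) (x s) ^ k))
      sums (c s * cnj (c t) * fock_kernel \<alpha> (x t) (x s))" for s t
    unfolding fock_kernel_def by (intro sums_mult) simp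
  then have "(\<lambda>k. \<Sum>s\<in>S. \<Sum>t\<in>S. c s * cnj (c t) * (complex_of_real (\<alpha>^k / fact k) * cinner (x t) (x s) ^ k))
      sums gram_form (\<lambda>s t. fock_kernel \<alpha> (x t) (x s)) S c"
    unfolding gram_form_def by (intro sums_sum)
  then show ?thesis
    unfolding gram_form_def by (simp add: sum_distrib_left algebra_simps)
qed

lemma gram_form_cinner_power_le_fock:
  fixes x :: "'s \<Rightarrow> complex ^ 'n"
  assumes "\<alpha> > 0"
  shows "\<alpha>^k / fact k * Re (gram_form (\<lambda>s t. cinner (x t) (x s) ^ k) S c)
    \<le> Re (gram_form (\<lambda>s t. fock_kernel \<alpha> (x t) (x s)) S c)"
proof -
  let ?g = "\<lambda>k. \<alpha>^k / fact k * Re (gram_form (\<lambda>s t. cinner (x t) (x s) ^ k) S c)"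
  have "Re (complex_of_real r * z) = r * Re z" for r z
    by simp
  then have "?g sums Re (gram_form (\<lambda>s t. fock_kernel \<alpha> (x t) (x s)) S c)"
    using sums_Re[OF gram_form_fock_sums[of \<alpha> x S c]] by (simp only:)
  moreover have "?g j \<ge> 0" for j
    using assms gram_form_cinner_power_nonneg[of x j S c] by simp
  ultimately show ?thesis
    using sum_le_suminf[of ?g "{k}"] by (simp add: sums_iff)
qed

lemma cmod_sum_mult_square_le:
  fixes W V :: "'a \<Rightarrow> complex"
  shows "(cmod (\<Sum>f\<in>B. W f * V f))\<^sup>2 \<le> (\<Sum>f\<in>B. (cmod (W f))\<^sup>2) * (\<Sum>f\<in>B. (cmod (V f))\<^sup>2)"
proof -
  have "cmod (\<Sum>f\<in>B. W f * V f) \<le> (\<Sum>f\<in>B. cmod (W f) * cmod (V f))"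
    by (metis (no_types, lifting) norm_mult norm_sum sum.cong)
  then have "(cmod (\<Sum>f\<in>B. W f * V f))\<^sup>2 \<le> (\<Sum>f\<in>B. cmod (W f) * cmod (V f))\<^sup>2"
    by (simp add: power_mono)
  also have "\<dots> \<le> (\<Sum>f\<in>B. (cmod (W f))\<^sup>2) * (\<Sum>f\<in>B. (cmod (V f))\<^sup>2)"
    by (rule Cauchy_Schwarz_ineq_sum)
  finally show ?thesis .
qed

lemma cmod_sum_prod_cinner_square_le:
  fixes w :: "'b \<Rightarrow> complex ^ 'n" and x :: "'s \<Rightarrow> complex ^ 'n"
  assumes "finite A"
  shows "(cmod (\<Sum>s\<in>S. c s * (\<Prod>r\<in>A. cinner (w r) (x s))))\<^sup>2 \<le>
    (\<Prod>r\<in>A. (norm (w r))\<^sup>2) * Re (gram_form (\<lambda>s t. cinner (x t) (x s) ^ card A) S c)"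
proof -
  let ?F = "PiE A (\<lambda>_. UNIV :: 'n set)"
  let ?V = "\<lambda>f. \<Sum>s\<in>S. c s * (\<Prod>r\<in>A. cnj (x s $ f r))"
  let ?W = "\<lambda>f. \<Prod>r\<in>A. w r $ f r"
  have "(\<Sum>s\<in>S. c s * (\<Prod>r\<in>A. cinner (w r) (x s))) =
      (\<Sum>s\<in>S. \<Sum>f\<in>?F. c s * (?W f * (\<Prod>r\<in>A. cnj (x s $ f r))))"
    unfolding prod_cinner_eq_sum_PiE[OF assms] by (simp add: sum_distrib_left prod.distrib)
  also have "\<dots> = (\<Sum>f\<in>?F. ?W f * ?V f)"
    by (subst sum.swap) (simp add: sum_distrib_left algebra_simps)
  finally have split: "(\<Sum>s\<in>S. c s * (\<Prod>r\<in>A. cinner (w r) (x s))) = (\<Sum>f\<in>?F. ?W f * ?V f)" .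
  have W: "(\<Sum>f\<in>?F. (cmod (?W f))\<^sup>2) = (\<Prod>r\<in>A. (norm (w r))\<^sup>2)"
    unfolding power2_norm_vec_complex using assms
    by (simp add: prod_sum_PiE prod_norm[symmetric] prod_power_distrib)
  have V: "(\<Sum>f\<in>?F. (cmod (?V f))\<^sup>2) = Re (gram_form (\<lambda>s t. cinner (x t) (x s) ^ card A) S c)"
    unfolding gram_form_cinner_power_eq_sum_squares[OF assms] by simp
  show ?thesis
    using cmod_sum_mult_square_le[of ?W ?V ?F] unfolding split W V .
qed

lemma cmod_sum_prod_cinner_square_le_fock:
  fixes w :: "'b \<Rightarrow> complex ^ 'n" and x :: "'s \<Rightarrow> complex ^ 'n"
  assumes "\<alpha> > 0" and "finite A" and "\<And>r. r \<in> A \<Longrightarrow> (norm (w r))\<^sup>2 \<le> \<rho>"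
  shows "(cmod (\<Sum>s\<in>S. c s * (\<Prod>r\<in>A. cinner (w r) (x s))))\<^sup>2 \<le>
    fact (card A) * (\<rho> / \<alpha>) ^ card A * Re (gram_form (\<lambda>s t. fock_kernel \<alpha> (x t) (x s)) S c)"
proof -
  let ?P = "Re (gram_form (\<lambda>s t. cinner (x t) (x s) ^ card A) S c)"
  have "(\<Prod>r\<in>A. (norm (w r))\<^sup>2) \<le> \<rho> ^ card A"
    using prod_mono[of A "\<lambda>r. (norm (w r))\<^sup>2" "\<lambda>_. \<rho>"] assms(3) by simp
  then have "(cmod (\<Sum>s\<in>S. c s * (\<Prod>r\<in>A. cinner (w r) (x s))))\<^sup>2 \<le> \<rho> ^ card A * ?P"
    using cmod_sum_prod_cinner_square_le[OF assms(2), of c w x S]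
      gram_form_cinner_power_nonneg[of x "card A" S c]
    by (meson mult_right_mono order_trans)
  also have "\<dots> = fact (card A) * (\<rho> / \<alpha>) ^ card A * (\<alpha> ^ card A / fact (card A) * ?P)"
    using assms(1) by (simp add: power_divide field_simps)
  also have "\<dots> \<le> fact (card A) * (\<rho> / \<alpha>) ^ card A * Re (gram_form (\<lambda>s t. fock_kernel \<alpha> (x t) (x s)) S c)"
  proof (rule mult_left_mono[OF gram_form_cinner_power_le_fock[OF assms(1)]])
    have "\<rho> \<ge> 0" if "A \<noteq> {}"
      using that assms(3) by (meson all_not_in_conv order_trans zero_le_power2)
    then show "0 \<le> fact (card A) * (\<rho> / \<alpha>) ^ card A"
      using assms(1) by (cases "A = {}") auto
  qed
  finally show ?thesis .
qed

lemma sum_Pow_prod_cinner_interpolant: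
  fixes x :: "'s \<Rightarrow> complex ^ 'n"
  assumes "finite T" and "\<mu> \<notin> T" and "x \<mu> = 0" and "c \<mu> = 1" and "\<And>t. t \<in> T \<Longrightarrow> x t \<noteq> 0"
  defines "w t \<equiv> - inverse ((norm (x t))\<^sup>2) *\<^sub>R x t"
  shows "(\<Sum>A\<in>Pow T. \<Sum>s\<in>insert \<mu> T. c s * (\<Prod>r\<in>A. cinner (w r) (x s))) = 1"
proof -
  define p where "p y = (\<Prod>t\<in>T. cinner (w t) y + 1)" for y
  have p_eq: "p y = (\<Sum>A\<in>Pow T. \<Prod>r\<in>A. cinner (w r) y)" for y
    unfolding p_def using prod_add[OF assms(1), of "\<lambda>t. cinner (w t) y" "\<lambda>_. 1"] by simp
  have "cinner (w s) (x s) + 1 = 0" if "s \<in> T" for s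
    using assms(5)[OF that] unfolding w_def cinner_scaleR_left cinner_self by simp
  then have "p (x s) = 0" if "s \<in> T" for s
    unfolding p_def using assms(1) that by (simp add: prod_zero_iff) blast
  moreover have "p (x \<mu>) = 1"
    unfolding p_def assms(3) cinner_def by simp
  ultimately have "(\<Sum>s\<in>insert \<mu> T. c s * p (x s)) = 1"
    using assms(1,2,4) by simp
  then show ?thesis
    unfolding p_eq by (subst sum.swap) (simp add: sum_distrib_left)
qed

lemma one_le_four_power_mult_of_sum_Pow:
  fixes L :: "'a set \<Rightarrow> complex"
  assumes "finite T" and "card T \<le> m" and "(\<Sum>A\<in>Pow T. L A) = 1"
    and "\<And>A. A \<in> Pow T \<Longrightarrow> (cmod (L A))\<^sup>2 \<le> b"
  shows "1 \<le> 4 ^ m * b"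
proof -
  have "b \<ge> 0"
    using assms(4)[of "{}"] by (meson Pow_bottom order_trans zero_le_power2)
  have "1 = cmod (\<Sum>A\<in>Pow T. L A)"
    using assms(3) by simp
  also have "\<dots> \<le> (\<Sum>A\<in>Pow T. sqrt b)"
    using assms(4) by (intro order_trans[OF norm_sum sum_mono]) (simp add: real_le_rsqrt)
  also have "\<dots> = 2 ^ card T * sqrt b"
    using assms(1) by (simp add: card_Pow)
  also have "\<dots> \<le> 2 ^ m * sqrt b"
    using assms(2) \<open>b \<ge> 0\<close> by (intro mult_right_mono power_increasing) auto
  finally have "1 \<le> (2 ^ m * sqrt b)\<^sup>2"
    by (simp add: one_le_power)
  also have "\<dots> = ((2::real) ^ m)\<^sup>2 * b"
    using \<open>b \<ge> 0\<close> by (simp add: power_mult_distrib)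
  also have "((2::real) ^ m)\<^sup>2 = 4 ^ m"
    by (simp add: power2_eq_square flip: power_mult_distrib)
  finally show ?thesis .
qed

lemma gram_form_fock_lower_bound:
  fixes x :: "'s \<Rightarrow> complex ^ 'n"
  assumes "\<alpha> > 0" and "d > 0" and "finite S" and "card S \<le> m" and "\<mu> \<in> S"
    and "x \<mu> = 0" and "c \<mu> = 1" and sep: "\<And>t. t \<in> S - {\<mu>} \<Longrightarrow> d \<le> (norm (x t))\<^sup>2"
  shows "1 / (4 ^ m * (fact m * (max 1 (1 / (d * \<alpha>))) ^ m))
    \<le> Re (gram_form (\<lambda>s t. fock_kernel \<alpha> (x t) (x s)) S c)"
proof -
  define q where "q = Re (gram_form (\<lambda>s t. fock_kernel \<alpha> (x t) (x s)) S c)"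
  define B where "B = fact m * (max 1 (1 / (d * \<alpha>))) ^ m"
  define T where "T = S - {\<mu>}"
  define w where "w t = - inverse ((norm (x t))\<^sup>2) *\<^sub>R x t" for t
  define L where "L A = (\<Sum>s\<in>S. c s * (\<Prod>r\<in>A. cinner (w r) (x s)))" for A
  have "finite T" and "card T \<le> m" and S_eq: "S = insert \<mu> T" and "\<mu> \<notin> T"
    using assms(3,4,5) by (auto simp: T_def card_Diff_singleton)
  have x_nonzero: "x t \<noteq> 0" if "t \<in> T" for t
    using sep[of t] that assms(2) by (auto simp: T_def)
  have "(\<Sum>A\<in>Pow T. L A) = 1"
    unfolding L_def w_def S_eq
    by (rule sum_Pow_prod_cinner_interpolant) (use assms x_nonzero \<open>finite T\<close> \<open>\<mu> \<notin> T\<close> in auto)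
  have "q \<ge> 0"
    using gram_form_cinner_power_le_fock[OF assms(1), of 0 x S c]
      gram_form_cinner_power_nonneg[of x 0 S c] by (simp add: q_def)
  have "B \<ge> 1"
proof -
    have "(1::real) \<le> max 1 (1 / (d * \<alpha>)) ^ m"
      by (simp add: one_le_power)
    then show ?thesis
      unfolding B_def using fact_ge_1[of m, where 'a=real] by (metis mult_mono' mult_1 zero_le_one)
  qed
  have norm_w: "(norm (w t))\<^sup>2 \<le> 1 / d" if "t \<in> T" for t
proof -
    have "(norm (w t))\<^sup>2 = 1 / (norm (x t))\<^sup>2"
      using x_nonzero[OF that] by (simp add: w_def power2_eq_square field_simps)
    also have "\<dots> \<le> 1 / d"
      using sep[of t] that assms(2) by (simp add: T_def frac_le)
    finally show ?thesis .
  qed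
  have L_bound: "(cmod (L A))\<^sup>2 \<le> B * q" if "A \<in> Pow T" for A
proof -
    have "finite A" and "card A \<le> m"
      using that \<open>finite T\<close> \<open>card T \<le> m\<close> by (auto intro: finite_subset dest: card_mono)
    have "(cmod (L A))\<^sup>2 \<le> fact (card A) * (1 / d / \<alpha>) ^ card A * q"
      unfolding L_def q_def
      by (rule cmod_sum_prod_cinner_square_le_fock[OF assms(1) \<open>finite A\<close>]) (use that norm_w in auto)
    also have "\<dots> \<le> B * q"
    proof (rule mult_right_mono[OF _ \<open>q \<ge> 0\<close>])
      have "(1 / d / \<alpha>) ^ card A \<le> (max 1 (1 / (d * \<alpha>))) ^ card A"
        using assms(1,2) by (intro power_mono) auto
      also have "\<dots> \<le> (max 1 (1 / (d * \<alpha>))) ^ m"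
        using \<open>card A \<le> m\<close> by (intro power_increasing) auto
      finally show "fact (card A) * (1 / d / \<alpha>) ^ card A \<le> B"
        unfolding B_def using \<open>card A \<le> m\<close> assms(1,2) by (intro mult_mono fact_mono) auto
    qed
    finally show ?thesis .
  qed
  have "1 \<le> 4 ^ m * (B * q)"
    by (rule one_le_four_power_mult_of_sum_Pow[OF \<open>finite T\<close> \<open>card T \<le> m\<close> \<open>(\<Sum>A\<in>Pow T. L A) = 1\<close> L_bound])
  then show ?thesis
    using \<open>B \<ge> 1\<close> by (simp add: q_def B_def field_simps)
qed

lemma nk_comb_norm_eq_gram_form: "nk_comb_norm K A a = sqrt (Re (gram_form (nk_inner K) A a))"
  unfolding nk_comb_norm_def gram_form_def ..

lemma sqrt_exp: "sqrt (exp x) = exp (x / 2)"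
  by (metis exp_ge_zero power2_eq_square real_sqrt_abs abs_of_nonneg exp_add field_sum_of_halves)

lemma nk_inner_fock:
  "nk_inner (fock_kernel \<alpha>) s t =
     exp (complex_of_real \<alpha> * cinner t s - complex_of_real (\<alpha> * ((norm s)\<^sup>2 + (norm t)\<^sup>2) / 2))"
proof -
  have diag: "Re (fock_kernel \<alpha> z z) = exp (\<alpha> * (norm z)\<^sup>2)" for z
    unfolding fock_kernel_def cinner_self by (simp only: exp_of_real Re_complex_of_real flip: of_real_mult)
  have "sqrt (Re (fock_kernel \<alpha> s s)) * sqrt (Re (fock_kernel \<alpha> t t)) =
      exp (\<alpha> * ((norm s)\<^sup>2 + (norm t)\<^sup>2) / 2)"
    unfolding diag sqrt_exp by (simp add: field_simps flip: exp_add)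
  then show ?thesis
    unfolding nk_inner_def fock_kernel_def by (simp add: exp_diff flip: exp_of_real)
qed

lemma nk_inner_fock_self: "nk_inner (fock_kernel \<alpha>) s s = 1"
  unfolding nk_inner_fock cinner_self by simp

lemma nk_inner_fock_translate:
  "nk_inner (fock_kernel \<alpha>) s t =
     nk_inner (fock_kernel \<alpha>) s \<mu> * cnj (nk_inner (fock_kernel \<alpha>) t \<mu>) * fock_kernel \<alpha> (t - \<mu>) (s - \<mu>)"
proof -
  let ?a = "complex_of_real \<alpha>"
  have "?a * cinner t s - complex_of_real (\<alpha> * ((norm s)\<^sup>2 + (norm t)\<^sup>2) / 2) =
     (?a * cinner \<mu> s - complex_of_real (\<alpha> * ((norm s)\<^sup>2 + (norm \<mu>)\<^sup>2) / 2)) +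
     (?a * cinner t \<mu> - complex_of_real (\<alpha> * ((norm t)\<^sup>2 + (norm \<mu>)\<^sup>2) / 2)) +
     ?a * cinner (t - \<mu>) (s - \<mu>)"
    unfolding cinner_translate[of t s \<mu>] cinner_self[of \<mu>] by (simp add: field_simps)
  then show ?thesis
    unfolding nk_inner_fock fock_kernel_def by (simp add: exp_add exp_cnj cnj_cinner)
qed

lemma cmod_nk_inner_fock_square:
  "(cmod (nk_inner (fock_kernel \<alpha>) s t))\<^sup>2 = exp (- \<alpha> * (dist s t)\<^sup>2)"
proof -
  have "(cmod (nk_inner (fock_kernel \<alpha>) s t))\<^sup>2 =
      exp (2 * (\<alpha> * inner t s - \<alpha> * ((norm s)\<^sup>2 + (norm t)\<^sup>2) / 2))"
    unfolding nk_inner_fock by (simp add: Re_cinner power2_eq_square flip: exp_add)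
  also have "\<dots> = exp (- \<alpha> * (dist s t)\<^sup>2)"
    unfolding dist_norm dot_norm_neg by (simp add: norm_minus_commute field_simps)
  finally show ?thesis .
qed

lemma weakly_separated_fock_imp_dist_ge:
  assumes "\<alpha> > 0" and "weakly_separated (fock_kernel \<alpha>) lam"
  obtains d where "d > 0" and "\<And>i j. i \<noteq> j \<Longrightarrow> d \<le> (dist (lam i) (lam j))\<^sup>2"
proof -
  obtain \<epsilon> where "\<epsilon> > 0" and sep: "\<And>i j. i \<noteq> j \<Longrightarrow> \<epsilon> \<le> kdist (fock_kernel \<alpha>) (lam i) (lam j)"
    using assms(2) unfolding weakly_separated_def by blast
  have exp_le: "exp (- \<alpha> * (dist (lam i) (lam j))\<^sup>2) \<le> 1 - \<epsilon>\<^sup>2" if "i \<noteq> j" for i j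
proof -
    define y where "y = 1 - exp (- \<alpha> * (dist (lam i) (lam j))\<^sup>2)"
    have "\<epsilon> \<le> sqrt y"
      using sep[OF that] unfolding kdist_def cmod_nk_inner_fock_square y_def .
    then have "sqrt y > 0"
      using \<open>\<epsilon> > 0\<close> by linarith
    then have "y > 0"
      by simp
    have "\<epsilon>\<^sup>2 \<le> (sqrt y)\<^sup>2"
      using \<open>\<epsilon> \<le> sqrt y\<close> \<open>\<epsilon> > 0\<close> by (intro power_mono) auto
    then show ?thesis
      using \<open>y > 0\<close> by (simp add: y_def)
  qed
  then have "1 - \<epsilon>\<^sup>2 > 0"
    using exp_le[of 0 1] exp_gt_zero[of "- \<alpha> * (dist (lam 0) (lam 1))\<^sup>2"] by linarith
  define d where "d = - ln (1 - \<epsilon>\<^sup>2) / \<alpha>"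
  show thesis
  proof
    show "d > 0"
    proof -
      have "ln (1 - \<epsilon>\<^sup>2) < 0"
        using \<open>1 - \<epsilon>\<^sup>2 > 0\<close> \<open>\<epsilon> > 0\<close> by (intro ln_less_zero) auto
      then show ?thesis
        unfolding d_def using assms(1) by (simp add: divide_neg_pos)
    qed
    show "d \<le> (dist (lam i) (lam j))\<^sup>2" if "i \<noteq> j" for i j
    proof -
      have "- \<alpha> * (dist (lam i) (lam j))\<^sup>2 \<le> ln (1 - \<epsilon>\<^sup>2)"
        using exp_le[OF that] \<open>1 - \<epsilon>\<^sup>2 > 0\<close> by (simp add: ln_ge_iff)
      then show ?thesis
        unfolding d_def using assms(1) by (simp add: field_simps)
    qed
  qed
qed

lemma gram_form_nk_inner_fock_translate:
  "gram_form (nk_inner (fock_kernel \<alpha>)) S a =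
     gram_form (\<lambda>s t. fock_kernel \<alpha> (t - \<mu>) (s - \<mu>)) S (\<lambda>s. a s * nk_inner (fock_kernel \<alpha>) s \<mu>)"
  unfolding gram_form_def
  by (intro sum.cong refl, subst nk_inner_fock_translate[where \<mu> = \<mu>]) (simp add: algebra_simps)

lemma nk_dist_span_fock_lower_bound:
  assumes "\<alpha> > 0" and "d > 0" and "finite S" and "card S \<le> m" and "\<mu> \<in> S"
    and "\<And>t. t \<in> S - {\<mu>} \<Longrightarrow> d \<le> (dist t \<mu>)\<^sup>2"
  shows "sqrt (1 / (4 ^ m * (fact m * (max 1 (1 / (d * \<alpha>))) ^ m)))
    \<le> nk_dist_span (fock_kernel \<alpha>) \<mu> (S - {\<mu>})"
proof -
  have "insert \<mu> (S - {\<mu>}) = S"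
    using assms(5) by auto
  moreover have "sqrt (1 / (4 ^ m * (fact m * (max 1 (1 / (d * \<alpha>))) ^ m)))
      \<le> nk_comb_norm (fock_kernel \<alpha>) S a" if "a \<mu> = 1" for a
proof -
    have "1 / (4 ^ m * (fact m * (max 1 (1 / (d * \<alpha>))) ^ m))
        \<le> Re (gram_form (\<lambda>s t. fock_kernel \<alpha> (t - \<mu>) (s - \<mu>)) S (\<lambda>s. a s * nk_inner (fock_kernel \<alpha>) s \<mu>))"
      by (rule gram_form_fock_lower_bound[where x = "\<lambda>s. s - \<mu>"])
        (use assms that in \<open>auto simp: nk_inner_fock_self dist_norm\<close>)
    then show ?thesis
      unfolding nk_comb_norm_eq_gram_form gram_form_nk_inner_fock_translate[where \<mu> = \<mu>] by simp
  qed
  ultimately show ?thesis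
    unfolding nk_dist_span_def by (intro cINF_greatest) auto
qed

theorem mainTheorem17:
  fixes \<alpha> :: real
  assumes "\<alpha> > 0"
  shows "automatic_separation (fock_kernel \<alpha> :: complex ^ 'n \<Rightarrow> complex ^ 'n \<Rightarrow> complex)"
  unfolding automatic_separation_def m_weakly_separated_def
proof (intro allI impI)
  fix lam :: "nat \<Rightarrow> complex ^ 'n" and m :: nat
  assume "weakly_separated (fock_kernel \<alpha>) lam"
  then obtain d where "d > 0" and sep: "\<And>i j. i \<noteq> j \<Longrightarrow> d \<le> (dist (lam i) (lam j))\<^sup>2"
    using weakly_separated_fock_imp_dist_ge[OF assms] by blast
  show "\<exists>\<epsilon>>0. \<forall>S. S \<subseteq> range lam \<and> finite S \<and> card S = m \<longrightarrow>
      (\<forall>\<mu>\<in>S. \<epsilon> \<le> nk_dist_span (fock_kernel \<alpha>) \<mu> (S - {\<mu>}))"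
  proof (intro exI conjI allI impI ballI)
    fix S \<mu> assume S: "S \<subseteq> range lam \<and> finite S \<and> card S = m" and "\<mu> \<in> S"
    have "d \<le> (dist t \<mu>)\<^sup>2" if t: "t \<in> S - {\<mu>}" for t
    proof -
      obtain i j where "t = lam i" and "\<mu> = lam j"
        using t S \<open>\<mu> \<in> S\<close> by blast
      then show ?thesis
        using t sep[of i j] by auto
    qed
    then show "sqrt (1 / (4 ^ m * (fact m * (max 1 (1 / (d * \<alpha>))) ^ m)))
        \<le> nk_dist_span (fock_kernel \<alpha>) \<mu> (S - {\<mu>})"
      using S by (intro nk_dist_span_fock_lower_bound[OF assms \<open>d > 0\<close> _ _ \<open>\<mu> \<in> S\<close>]) auto
  qed (use \<open>d > 0\<close> in simp)
qed

end
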